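(* Let $V$ be a reflexive Banach space, $X$ a Banach space, $\gamma\in\mathcal{L}(V,X)$ with $c_\gamma:=\|\gamma\|_{\mathcal{L}(V,X)}$ and adjoint $\gamma^*\colon X^*\to V^*$. Let $A\colon V\to V^*$, $J\colon X\times X\to\mathbb{R}$ and $f\in V^*$ satisfy: (A1) $A$ is linear and bounded; (A2) $\langle Au,v\rangle_{V^*\times V}=\langle Av,u\rangle_{V^*\times V}$ for all $u,v\in V$; (A3) there is $m_A>0$ with $\langle Au,u\rangle_{V^*\times V}\ge m_A\|u\|_V^2$ for all $u\in V$; (J1) $J$ is locally Lipschitz continuous with respect to its second variable; (J2) there exist $c_0,c_1,c_2\ge 0$ with $\|\partial_2 J(w,v)\|_{X^*}\le c_0+c_1\|v\|_X+c_2\|w\|_X$ for all $w,v\in X$; (J3) there exist $m_\alpha,m_L\ge0$ such that $J_2^0(w_1,v_1;v_2-v_1)+J_2^0(w_2,v_2;v_1-v_2)\le m_\alpha\|v_1-v_2\|_X^2+m_L\|w_1-w_2\|_X\|v_1-v_2\|_X$ for all $w_1,w_2,v_1,v_2\in X$; (S) $m_A>(m_\alpha+m_L)c_\gamma^2$. Define $\mathcal{L}\colon V\times V\to\mathbb{R}$ by $\mathcal{L}(w,v)=\tfrac12\langle Av,v\rangle_{V^*\times V}-\langle f,v\rangle_{V^*\times V}+J(\gamma w,\gamma v)$. Then there exists a unique $u\in V$ such that $0\in\partial_2\mathcal{L}(u,u)$.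
   Context: For a locally Lipschitz function $g$ on a Banach space $Y$, the generalized (Clarke) directional derivative at $x$ in direction $v$ is $g^0(x;v)=\limsup_{y\to x,\lambda\searrow0}\frac{g(y+\lambda v)-g(y)}{\lambda}$, and the Clarke subdifferential is $\partial g(x)=\{\xi\in Y^*:\langle\xi,v\rangle\le g^0(x;v)\ \forall v\in Y\}$. For a function of two variables, $\partial_2$ and $(\cdot)_2^0$ denote the Clarke subdifferential and generalized directional derivative with respect to the second variable. $\|\partial_2J(w,v)\|_{X^*}$ denotes $\sup\{\|\xi\|_{X^*}:\xi\in\partial_2J(w,v)\}$. *)

theory Defs
  imports "HOL-Analysis.Analysis"
begin

definition reflexive_space :: "'v::real_normed_vector itself \<Rightarrow> bool" where
  "reflexive_space _ \<longleftrightarrow>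
     (\<forall>\<Phi> :: ('v \<Rightarrow>\<^sub>L real) \<Rightarrow>\<^sub>L real. \<exists>v::'v. \<forall>\<xi>. blinfun_apply \<Phi> \<xi> = blinfun_apply \<xi> v)"

definition locally_lipschitz :: "('x::metric_space \<Rightarrow> real) \<Rightarrow> bool" where
  "locally_lipschitz g \<longleftrightarrow> (\<forall>x. \<exists>e>0. \<exists>L. L-lipschitz_on (ball x e) g)"

text \<open>Clarke generalized directional derivative
  g0(x;v) = limsup_{y \<rightarrow> x, t \<searrow> 0} (g(y + t v) - g y)/t
  (finite for locally Lipschitz g).\<close>
definition clarke_dd :: "('x::real_normed_vector \<Rightarrow> real) \<Rightarrow> 'x \<Rightarrow> 'x \<Rightarrow> real" where
  "clarke_dd g x v = real_of_ereal
     (Limsup (at (x, 0) within (UNIV \<times> {0<..}))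
        (\<lambda>(y, t::real). ereal ((g (y + t *\<^sub>R v) - g y) / t)))"

definition clarke_subdiff :: "('x::real_normed_vector \<Rightarrow> real) \<Rightarrow> 'x \<Rightarrow> ('x \<Rightarrow>\<^sub>L real) set" where
  "clarke_subdiff g x = {\<xi>. \<forall>v. blinfun_apply \<xi> v \<le> clarke_dd g x v}"

end

theory Submission
  imports Defs
begin

(*
  For fixed w the functional v \<mapsto> 1/2 <Av,v> - <f,v> + J(\<gamma>w,\<gamma>v) is the sum of
  the same functional with 1/2 replaced by \<theta>/2, where \<theta> = m_\<alpha> c_\<gamma>^2 / m_A < 1, and of
  (1 - \<theta>)/2 <Av,v>. By (J3) and coercivity the first summand has a monotone Clarke derivative,
  hence is convex, so the whole functional is strongly midpoint convex and bounded below. A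
  minimising sequence is therefore Cauchy, and its limit is a minimiser, hence a Clarke-stationary
  point. Testing (J3) with two stationary points u1, u2 for parameters w1, w2 gives
  (m_A - m_\<alpha> c_\<gamma>^2) |u1 - u2| \<le> m_L c_\<gamma>^2 |w1 - w2|, so by (S) the map w \<mapsto> u is a
  contraction, and its unique fixed point is the unique solution.
*)

section \<open>Locally Lipschitz functions\<close>

lemma norm_blinfun_diff_le: "norm (blinfun_apply T x - T y) \<le> norm T * norm (x - y)"
  using norm_blinfun[of T "x - y"] by (simp add: blinfun.diff_right)

lemma abs_bilinear_le:
  fixes A :: "'a::real_normed_vector \<Rightarrow>\<^sub>L ('b::real_normed_vector \<Rightarrow>\<^sub>L real)"
  shows "\<bar>A u w\<bar> \<le> norm A * norm u * norm w"
  using norm_blinfun[of "A u" w] mult_right_mono[OF norm_blinfun[of A u] norm_ge_zero[of w]]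
  by simp

lemma quadratic_form_diff_bound:
  fixes A :: "'a::real_normed_vector \<Rightarrow>\<^sub>L ('a \<Rightarrow>\<^sub>L real)"
  shows "\<bar>A y y - A z z\<bar> \<le> norm A * (norm y + norm z) * norm (y - z)"
proof -
  have "A y y - A z z = A (y - z) y + A z (y - z)"
    by (simp add: blinfun.bilinear_simps)
  also have "\<bar>\<dots>\<bar> \<le> norm A * norm (y - z) * norm y + norm A * norm z * norm (y - z)"
    using abs_bilinear_le[of A "y - z" y] abs_bilinear_le[of A z "y - z"] by linarith
  finally show ?thesis
    by (simp add: algebra_simps)
qed

lemma locally_lipschitz_imp_isCont:
  assumes "locally_lipschitz g"
  shows "isCont g x"
proof -
  obtain e L where "e > 0" "L-lipschitz_on (ball x e) g"
    using assms unfolding locally_lipschitz_def by blast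
  then show ?thesis
    using lipschitz_on_continuous_on continuous_on_interior by fastforce
qed

lemma locally_lipschitz_add:
  assumes "locally_lipschitz g" and "locally_lipschitz k"
  shows "locally_lipschitz (\<lambda>x. g x + k x)"
  unfolding locally_lipschitz_def
proof
  fix x
  obtain e L where e: "e > 0" "L-lipschitz_on (ball x e) g"
    using assms(1) unfolding locally_lipschitz_def by blast
  obtain e' L' where e': "e' > 0" "L'-lipschitz_on (ball x e') k"
    using assms(2) unfolding locally_lipschitz_def by blast
  have "(L + L')-lipschitz_on (ball x (min e e')) (\<lambda>x. g x + k x)"
    by (intro lipschitz_on_add lipschitz_on_subset[OF e(2)] lipschitz_on_subset[OF e'(2)]) auto
  then show "\<exists>e>0. \<exists>L. L-lipschitz_on (ball x e) (\<lambda>x. g x + k x)"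
    using e(1) e'(1) by (intro exI[of _ "min e e'"]) auto
qed

lemma locally_lipschitz_compose_blinfun:
  assumes "locally_lipschitz g"
  shows "locally_lipschitz (\<lambda>x. g (blinfun_apply T x))"
  unfolding locally_lipschitz_def
proof
  fix x
  obtain e L where e: "e > 0" and lip: "L-lipschitz_on (ball (T x) e) g"
    using assms unfolding locally_lipschitz_def by blast
  define d where "d = e / (norm T + 1)"
  have nT: "norm T + 1 > 0"
    using norm_ge_zero[of T] by linarith
  have d: "d > 0"
    using e nT by (simp add: d_def)
  have T_ball: "T ` ball x d \<subseteq> ball (T x) e"
  proof clarify
    fix y assume "y \<in> ball x d"
    then have "norm (T x - T y) \<le> norm T * d"
      using norm_blinfun_diff_le[of T x y] mult_left_mono[of "norm (x - y)" d "norm T"]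
      by (simp add: dist_norm)
    also have "\<dots> < e"
      using e nT by (simp add: d_def field_simps)
    finally show "T y \<in> ball (T x) e" by (simp add: dist_norm)
  qed
  have "(L * norm T)-lipschitz_on (ball x d) (\<lambda>y. g (T y))"
    by (rule lipschitz_on_compose2[OF _ lipschitz_on_subset[OF lip T_ball]])
      (auto simp: lipschitz_on_def dist_norm norm_blinfun_diff_le)
  then show "\<exists>e>0. \<exists>L. L-lipschitz_on (ball x e) (\<lambda>y. g (T y))"
    using d by blast
qed

lemma locally_lipschitz_blinfun: "locally_lipschitz (blinfun_apply (f :: 'a::real_normed_vector \<Rightarrow>\<^sub>L real))"
proof -
  have "(norm f)-lipschitz_on UNIV (blinfun_apply f)"
    using norm_blinfun_diff_le[of f]
    by (intro lipschitz_onI) (auto simp: dist_real_def dist_norm)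
  then show ?thesis
    unfolding locally_lipschitz_def by (blast intro: lipschitz_on_subset zero_less_one)
qed

lemma locally_lipschitz_quadratic_form:
  fixes A :: "'a::real_normed_vector \<Rightarrow>\<^sub>L ('a \<Rightarrow>\<^sub>L real)"
  shows "locally_lipschitz (\<lambda>v. c * A v v)"
  unfolding locally_lipschitz_def
proof
  fix x
  have "(\<bar>c\<bar> * (norm A * (2 * (norm x + 1))))-lipschitz_on (ball x 1) (\<lambda>v. c * A v v)"
  proof (rule lipschitz_onI)
    fix y z assume "y \<in> ball x 1" "z \<in> ball x 1"
    then have "norm y + norm z \<le> 2 * (norm x + 1)"
      using norm_triangle_ineq2[of y x] norm_triangle_ineq2[of z x]
      by (simp add: dist_norm norm_minus_commute)
    then have "\<bar>A y y - A z z\<bar> \<le> norm A * (2 * (norm x + 1)) * norm (y - z)"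
      using quadratic_form_diff_bound[of A y z]
      by (smt (verit) mult_right_mono mult_left_mono norm_ge_zero)
    then show "dist (c * A y y) (c * A z z) \<le> \<bar>c\<bar> * (norm A * (2 * (norm x + 1))) * dist y z"
      by (simp add: dist_real_def dist_norm abs_mult right_diff_distrib[symmetric] mult_left_mono
          mult.assoc)
  qed simp
  then show "\<exists>e>0. \<exists>L. L-lipschitz_on (ball x e) (\<lambda>v. c * A v v)"
    using zero_less_one by blast
qed

section \<open>The Clarke generalized directional derivative\<close>

definition clarke_filter :: "'a::real_normed_vector \<Rightarrow> ('a \<times> real) filter" where
  "clarke_filter x = at (x, 0) within (UNIV \<times> {0<..})"

definition diff_quot :: "('a::real_normed_vector \<Rightarrow> real) \<Rightarrow> 'a \<Rightarrow> 'a \<times> real \<Rightarrow> real" where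
  "diff_quot g v p = (g (fst p + snd p *\<^sub>R v) - g (fst p)) / snd p"

lemma clarke_dd_eq_Limsup:
  "clarke_dd g x v = real_of_ereal (Limsup (clarke_filter x) (\<lambda>p. ereal (diff_quot g v p)))"
  unfolding clarke_dd_def clarke_filter_def diff_quot_def by (simp only: case_prod_unfold)

lemma filterlim_clarke_filter_right:
  "filterlim (\<lambda>t. (x, t)) (clarke_filter x) (at_right 0)"
  unfolding clarke_filter_def filterlim_at
  by (auto simp: eventually_at_filter intro!: tendsto_eq_intros)

lemma clarke_filter_neq_bot: "clarke_filter x \<noteq> bot"
  using filterlim_clarke_filter_right[of x]
  by (auto simp: filterlim_def filtermap_bot_iff bot_unique)

lemma tendsto_fst_clarke_filter: "(fst \<longlongrightarrow> x) (clarke_filter x)"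
  and tendsto_snd_clarke_filter: "(snd \<longlongrightarrow> 0) (clarke_filter x)"
  using tendsto_fst[OF tendsto_ident_at] tendsto_snd[OF tendsto_ident_at]
  by (fastforce simp: clarke_filter_def)+

lemma eventually_clarke_filter_pos: "eventually (\<lambda>p. 0 < snd p) (clarke_filter x)"
  by (auto simp: clarke_filter_def eventually_at_filter intro: always_eventually)

lemma eventually_diff_quot_bounded:
  assumes "locally_lipschitz g"
  obtains L where "eventually (\<lambda>p. \<bar>diff_quot g v p\<bar> \<le> L) (clarke_filter x)"
proof -
  obtain e L where e: "e > 0" and lip: "L-lipschitz_on (ball x e) g"
    using assms unfolding locally_lipschitz_def by blast
  have "((\<lambda>p. fst p + snd p *\<^sub>R v) \<longlongrightarrow> x + 0 *\<^sub>R v) (clarke_filter x)"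
    by (intro tendsto_intros tendsto_fst_clarke_filter tendsto_snd_clarke_filter)
  then have "eventually (\<lambda>p. fst p + snd p *\<^sub>R v \<in> ball x e) (clarke_filter x)"
    using tendstoD[OF _ e] by (simp add: dist_commute)
  moreover have "eventually (\<lambda>p. fst p \<in> ball x e) (clarke_filter x)"
    using tendstoD[OF tendsto_fst_clarke_filter e] by (simp add: dist_commute)
  ultimately have "eventually (\<lambda>p. \<bar>diff_quot g v p\<bar> \<le> L * norm v) (clarke_filter x)"
    using eventually_clarke_filter_pos
  proof eventually_elim
    case (elim p)
    have "\<bar>g (fst p + snd p *\<^sub>R v) - g (fst p)\<bar> \<le> L * (snd p * norm v)"
      using lipschitz_onD[OF lip elim(1,2)] elim(3) by (simp add: dist_real_def dist_norm)
    then show ?case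
      using elim(3) by (simp add: diff_quot_def abs_divide divide_le_eq mult_ac)
  qed
  then show thesis by (rule that)
qed

(* Local Lipschitz continuity keeps the limsup finite, so the real_of_ereal in clarke_dd loses
   nothing. *)
lemma Limsup_diff_quot_eq_clarke_dd:
  assumes "locally_lipschitz g"
  shows "Limsup (clarke_filter x) (\<lambda>p. ereal (diff_quot g v p)) = ereal (clarke_dd g x v)"
proof -
  obtain L where ev: "eventually (\<lambda>p. \<bar>diff_quot g v p\<bar> \<le> L) (clarke_filter x)"
    using eventually_diff_quot_bounded[OF assms] .
  have "Limsup (clarke_filter x) (\<lambda>p. ereal (diff_quot g v p)) \<le> ereal L"
    by (rule Limsup_bounded) (use ev in \<open>eventually_elim, auto\<close>)
  moreover have "ereal (- L) \<le> Limsup (clarke_filter x) (\<lambda>p. ereal (diff_quot g v p))"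
    by (rule le_Limsup[OF clarke_filter_neq_bot]) (use ev in \<open>eventually_elim, auto\<close>)
  ultimately show ?thesis
    unfolding clarke_dd_eq_Limsup by (intro ereal_real'[symmetric]) auto
qed

lemma clarke_dd_le_if_eventually:
  assumes "locally_lipschitz g"
    and "\<And>\<epsilon>. \<epsilon> > 0 \<Longrightarrow> eventually (\<lambda>p. diff_quot g v p \<le> b + \<epsilon>) (clarke_filter x)"
  shows "clarke_dd g x v \<le> b"
proof (rule field_le_epsilon)
  fix \<epsilon> :: real assume "\<epsilon> > 0"
  then have "Limsup (clarke_filter x) (\<lambda>p. ereal (diff_quot g v p)) \<le> ereal (b + \<epsilon>)"
    by (intro Limsup_bounded) (use assms(2) in \<open>fastforce elim: eventually_mono\<close>)
  then show "clarke_dd g x v \<le> b + \<epsilon>"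
    by (simp add: Limsup_diff_quot_eq_clarke_dd[OF assms(1)])
qed

lemma eventually_diff_quot_less_clarke_dd:
  assumes "locally_lipschitz g" and "\<epsilon> > 0"
  shows "eventually (\<lambda>p. diff_quot g v p < clarke_dd g x v + \<epsilon>) (clarke_filter x)"
proof -
  have "Limsup (clarke_filter x) (\<lambda>p. ereal (diff_quot g v p)) < ereal (clarke_dd g x v + \<epsilon>)"
    using assms by (simp add: Limsup_diff_quot_eq_clarke_dd)
  from Limsup_lessD[OF this] show ?thesis by eventually_elim simp
qed

lemma clarke_dd_ge_if_frequently:
  assumes "locally_lipschitz g" and "\<exists>\<^sub>F p in clarke_filter x. c \<le> diff_quot g v p"
  shows "c \<le> clarke_dd g x v"
proof (rule ccontr)
  assume "\<not> c \<le> clarke_dd g x v"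
  then have "eventually (\<lambda>p. diff_quot g v p < c) (clarke_filter x)"
    using eventually_diff_quot_less_clarke_dd[OF assms(1), of "c - clarke_dd g x v" v x] by simp
  then show False
    using assms(2) by (simp add: frequently_def eventually_mono not_le)
qed

lemma clarke_dd_ge_right_quotient:
  assumes "locally_lipschitz g"
    and "\<exists>\<^sub>F t in at_right 0. c \<le> (g (x + t *\<^sub>R v) - g x) / t"
  shows "c \<le> clarke_dd g x v"
proof (rule clarke_dd_ge_if_frequently[OF assms(1)])
  have "\<exists>\<^sub>F p in filtermap (\<lambda>t. (x, t)) (at_right 0). c \<le> diff_quot g v p"
    using assms(2) by (simp add: frequently_filtermap diff_quot_def)
  then show "\<exists>\<^sub>F p in clarke_filter x. c \<le> diff_quot g v p"
    using filterlim_clarke_filter_right[unfolded filterlim_def]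
    by (auto simp: frequently_def dest: filter_leD)
qed

lemma zero_in_clarke_subdiff_iff: "0 \<in> clarke_subdiff g x \<longleftrightarrow> (\<forall>v. 0 \<le> clarke_dd g x v)"
  by (simp add: clarke_subdiff_def)

lemma clarke_dd_nonneg_at_minimum:
  assumes "locally_lipschitz g" and "\<And>y. g x \<le> g y"
  shows "0 \<le> clarke_dd g x v"
proof (rule clarke_dd_ge_right_quotient[OF assms(1)])
  have "eventually (\<lambda>t. 0 \<le> (g (x + t *\<^sub>R v) - g x) / t) (at_right 0)"
    using assms(2) by (auto simp: eventually_at_right_field intro!: exI[of _ 1])
  then show "\<exists>\<^sub>F t in at_right 0. 0 \<le> (g (x + t *\<^sub>R v) - g x) / t"
    by (simp add: eventually_frequently)
qed

lemma clarke_dd_eq_of_tendsto: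
  assumes "(diff_quot g v \<longlongrightarrow> c) (clarke_filter x)"
  shows "clarke_dd g x v = c"
proof -
  have "((\<lambda>p. ereal (diff_quot g v p)) \<longlongrightarrow> ereal c) (clarke_filter x)"
    using assms by (rule tendsto_ereal)
  then have "Limsup (clarke_filter x) (\<lambda>p. ereal (diff_quot g v p)) = ereal c"
    by (rule lim_imp_Limsup[rotated]) (simp add: clarke_filter_neq_bot)
  then show ?thesis
    by (simp add: clarke_dd_eq_Limsup)
qed

lemma diff_quot_add: "diff_quot (\<lambda>y. g y + k y) v p = diff_quot g v p + diff_quot k v p"
  by (simp add: diff_quot_def add_divide_distrib[symmetric] algebra_simps)

lemma clarke_dd_add_le:
  assumes "locally_lipschitz g" and "locally_lipschitz k"
  shows "clarke_dd (\<lambda>y. g y + k y) x v \<le> clarke_dd g x v + clarke_dd k x v"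
proof (rule clarke_dd_le_if_eventually[OF locally_lipschitz_add[OF assms]])
  fix \<epsilon> :: real assume "\<epsilon> > 0"
  then have "\<epsilon> / 2 > 0" by simp
  from eventually_diff_quot_less_clarke_dd[OF assms(1) this, of v x]
    eventually_diff_quot_less_clarke_dd[OF assms(2) this, of v x]
  show "eventually (\<lambda>p. diff_quot (\<lambda>y. g y + k y) v p \<le> clarke_dd g x v + clarke_dd k x v + \<epsilon>)
      (clarke_filter x)"
    by eventually_elim (simp add: diff_quot_add)
qed

lemma clarke_dd_compose_blinfun_le:
  assumes "locally_lipschitz g"
  shows "clarke_dd (\<lambda>y. g (blinfun_apply T y)) x v \<le> clarke_dd g (T x) (T v)"
proof (rule clarke_dd_le_if_eventually[OF locally_lipschitz_compose_blinfun[OF assms]])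
  fix \<epsilon> :: real assume "\<epsilon> > 0"
  have "filterlim (\<lambda>p. (T (fst p), snd p)) (clarke_filter (T x)) (clarke_filter x)"
    unfolding clarke_filter_def[of "T x"] filterlim_at
    using eventually_clarke_filter_pos[of x]
    by (auto elim: eventually_mono intro!: tendsto_Pair tendsto_snd_clarke_filter
        blinfun.tendsto[OF tendsto_const tendsto_fst_clarke_filter])
  from filterlim_iff[THEN iffD1, OF this, rule_format,
      OF eventually_diff_quot_less_clarke_dd[OF assms \<open>\<epsilon> > 0\<close>, of "T v"]]
  show "eventually (\<lambda>p. diff_quot (\<lambda>y. g (T y)) v p \<le> clarke_dd g (T x) (T v) + \<epsilon>) (clarke_filter x)"
    by eventually_elim (simp add: diff_quot_def blinfun.add_right blinfun.scaleR_right)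
qed

section \<open>Convexity and minimisers\<close>

lemma Dini_mean_value_le:
  fixes h :: "real \<Rightarrow> real"
  assumes ab: "a \<le> b" and cont: "continuous_on {a..b} h"
    and slope: "\<And>q. a \<le> q \<Longrightarrow> q < b \<Longrightarrow> eventually (\<lambda>t. h (q + t) - h q \<le> c * t) (at_right 0)"
  shows "h b - h a \<le> c * (b - a)"
proof -
  define g where "g r = h r - c * r" for r
  define S where "S = {a..b} \<inter> g -` {..g a}"
  have "closed S"
    unfolding S_def g_def by (intro continuous_closed_preimage continuous_intros cont)
  moreover have "a \<in> S" "bdd_above S"
    using ab by (auto simp: S_def bdd_above_def)
  ultimately have sup_S: "Sup S \<in> S"
    using closed_contains_Sup by blast
  have "Sup S = b"
  proof (rule ccontr)
    assume "Sup S \<noteq> b"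
    with sup_S have s: "a \<le> Sup S" "Sup S < b" by (auto simp: S_def)
    then obtain d where d: "d > 0" and d_slope: "\<And>t. 0 < t \<Longrightarrow> t < d \<Longrightarrow> g (Sup S + t) \<le> g (Sup S)"
      using slope[of "Sup S"] by (auto simp: eventually_at_right_field g_def algebra_simps)
    define t where "t = min (d / 2) (b - Sup S)"
    have t: "0 < t" "t < d" using d s by (auto simp: t_def)
    then have "Sup S + t \<in> S"
      using sup_S d_slope[OF t] by (auto simp: S_def t_def)
    then have "Sup S + t \<le> Sup S"
      using \<open>bdd_above S\<close> by (rule cSup_upper)
    with t show False by simp
  qed
  with sup_S show ?thesis by (simp add: S_def g_def algebra_simps)
qed

lemma frequently_right_slope_gt:
  fixes h :: "real \<Rightarrow> real"
  assumes "a \<le> b" "continuous_on {a..b} h" "c * (b - a) < h b - h a"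
  obtains q where "a \<le> q" "q < b" "\<exists>\<^sub>F t in at_right 0. c * t < h (q + t) - h q"
  using Dini_mean_value_le[OF assms(1,2), of c] assms(3) by (force simp: frequently_def not_less)

lemma chord_violation_slopes:
  fixes h :: "real \<Rightarrow> real"
  assumes cont: "continuous_on {0..1} h" and r: "0 \<le> r" "r \<le> 1"
    and above: "(1 - r) * h 0 + r * h 1 < h r"
  obtains q q' c c' where "0 \<le> q" "q < q'" "q' \<le> 1" "c' < c"
    "\<exists>\<^sub>F t in at_right 0. c * t < h (q + t) - h q"
    "\<exists>\<^sub>F t in at_right 0. h q' - h (q' - t) < c' * t"
proof -
  (* c and c' separate the chord slope h 1 - h 0 from the mean slopes on [0,r] and [r,1]. *)
  define \<delta> where "\<delta> = h r - ((1 - r) * h 0 + r * h 1)"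
  define c where "c = h 1 - h 0 + \<delta> / 2"
  define c' where "c' = h 1 - h 0 - \<delta> / 2"
  have \<delta>: "\<delta> > 0" using above by (simp add: \<delta>_def)
  have left: "h r - h 0 = r * (h 1 - h 0) + \<delta>" and right: "h 1 - h r = (1 - r) * (h 1 - h 0) - \<delta>"
    by (simp_all add: \<delta>_def algebra_simps)
  have small: "r * (\<delta> / 2) < \<delta>" "(1 - r) * (\<delta> / 2) < \<delta>"
    using \<delta> r mult_left_mono[of r 1 "\<delta> / 2"] mult_left_mono[of "1 - r" 1 "\<delta> / 2"] by simp_all
  have "c * (r - 0) = r * (h 1 - h 0) + r * (\<delta> / 2)"
    by (simp add: c_def algebra_simps)
  with left small(1) have slope_left: "c * (r - 0) < h r - h 0"
    by linarith
  have "- c' * (- r - - 1) = (1 - r) * (\<delta> / 2) - (1 - r) * (h 1 - h 0)"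
    by (simp add: c'_def algebra_simps)
  with right small(2) have slope_right: "- c' * (- r - - 1) < h r - h 1"
    by linarith
  have "continuous_on {0..r} h"
    using cont r by (auto elim: continuous_on_subset)
  with slope_left obtain q where q: "0 \<le> q" "q < r" "\<exists>\<^sub>F t in at_right 0. c * t < h (q + t) - h q"
    using frequently_right_slope_gt[of 0 r h c] r by auto
  have "continuous_on {-1..-r} (\<lambda>t. h (- t))"
    using cont r by (intro continuous_on_compose2[OF cont]) (auto intro: continuous_intros)
  with slope_right obtain p where p: "- 1 \<le> p" "p < - r" "\<exists>\<^sub>F t in at_right 0. - c' * t < h (- (p + t)) - h (- p)"
    using frequently_right_slope_gt[of "- 1" "- r" "\<lambda>t. h (- t)" "- c'"] r by auto
  have "- (p + t) = - p - t" for t :: real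
    by simp
  with p(3) have slope_q': "\<exists>\<^sub>F t in at_right 0. h (- p) - h (- p - t) < c' * t"
    by (auto elim!: frequently_elim1)
  have "c' < c"
    using \<delta> by (simp add: c_def c'_def)
  from that[OF q(1) _ _ this q(3) slope_q'] show thesis
    using q(2) p(1,2) by linarith
qed

lemma frequently_at_right_scale:
  fixes l :: real
  assumes "l > 0" and "\<exists>\<^sub>F \<tau> in at_right 0. P \<tau>"
  shows "\<exists>\<^sub>F t in at_right 0. 0 < t \<and> P (l * t)"
proof -
  have "\<exists>\<^sub>F t in at_right 0. P (l * t)"
    using assms filtermap_times_pos_at_right[of l 0] by (simp add: frequently_filtermap[symmetric])
  moreover have "eventually (\<lambda>t. 0 < t) (at_right (0::real))"
    by (simp add: eventually_at_right_less)
  ultimately show ?thesis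
    by (simp add: frequently_eventually_conj)
qed

lemma convex_on_if_clarke_dd_monotone:
  fixes g :: "'a::real_normed_vector \<Rightarrow> real"
  assumes lip: "locally_lipschitz g"
    and mono: "\<And>a b. clarke_dd g a (b - a) + clarke_dd g b (a - b) \<le> 0"
  shows "convex_on UNIV g"
proof (rule convex_onI)
  fix r :: real and x y :: 'a
  assume r: "0 < r" "r < 1"
  define h where "h t = g (x + t *\<^sub>R (y - x))" for t
  have "continuous_on UNIV g"
    using locally_lipschitz_imp_isCont[OF lip] by (simp add: continuous_at_imp_continuous_on)
  then have cont: "continuous_on {0..1} h"
    unfolding h_def by (rule continuous_on_compose2) (auto intro!: continuous_intros)
  show "g ((1 - r) *\<^sub>R x + r *\<^sub>R y) \<le> (1 - r) * g x + r * g y"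
  proof (rule ccontr)
    assume "\<not> ?thesis"
    moreover have "(1 - r) *\<^sub>R x + r *\<^sub>R y = x + r *\<^sub>R (y - x)"
      by (simp add: algebra_simps)
    ultimately have above: "(1 - r) * h 0 + r * h 1 < h r"
      by (simp add: h_def)
    obtain q q' c c' where qq': "0 \<le> q" "q < q'" "q' \<le> 1" "c' < c"
      and slope_q: "\<exists>\<^sub>F t in at_right 0. c * t < h (q + t) - h q"
      and slope_q': "\<exists>\<^sub>F t in at_right 0. h q' - h (q' - t) < c' * t"
      by (rule chord_violation_slopes[OF cont less_imp_le[OF r(1)] less_imp_le[OF r(2)] above])
    define a b l where "a = x + q *\<^sub>R (y - x)" and "b = x + q' *\<^sub>R (y - x)" and "l = q' - q"
    have l: "l > 0"
      using qq' by (simp add: l_def)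
    have "c * l \<le> clarke_dd g a (b - a)"
    proof (rule clarke_dd_ge_right_quotient[OF lip])
      show "\<exists>\<^sub>F t in at_right 0. c * l \<le> (g (a + t *\<^sub>R (b - a)) - g a) / t"
        using frequently_at_right_scale[OF l slope_q]
      proof (rule frequently_elim1)
        fix t assume t: "0 < t \<and> c * (l * t) < h (q + l * t) - h q"
        have "a + t *\<^sub>R (b - a) = x + (q + l * t) *\<^sub>R (y - x)"
          by (simp add: a_def b_def l_def algebra_simps)
        then have "g (a + t *\<^sub>R (b - a)) - g a = h (q + l * t) - h q"
          unfolding h_def a_def by (simp only:)
        with t show "c * l \<le> (g (a + t *\<^sub>R (b - a)) - g a) / t"
          by (simp add: pos_le_divide_eq mult.assoc)
      qed
    qed
    moreover have "- (c' * l) \<le> clarke_dd g b (a - b)"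
    proof (rule clarke_dd_ge_right_quotient[OF lip])
      show "\<exists>\<^sub>F t in at_right 0. - (c' * l) \<le> (g (b + t *\<^sub>R (a - b)) - g b) / t"
        using frequently_at_right_scale[OF l slope_q']
      proof (rule frequently_elim1)
        fix t assume t: "0 < t \<and> h q' - h (q' - l * t) < c' * (l * t)"
        have "b + t *\<^sub>R (a - b) = x + (q' - l * t) *\<^sub>R (y - x)"
          by (simp add: a_def b_def l_def algebra_simps)
        then have "g (b + t *\<^sub>R (a - b)) - g b = h (q' - l * t) - h q'"
          unfolding h_def b_def by (simp only:)
        with t show "- (c' * l) \<le> (g (b + t *\<^sub>R (a - b)) - g b) / t"
          by (simp add: pos_le_divide_eq mult.assoc)
      qed
    qed
    moreover have "0 < (c - c') * l"
      using qq' l by simp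
    ultimately show False
      using mono[of a b] by (simp add: algebra_simps)
  qed
qed simp

lemma convex_on_affine_minorant:
  fixes g :: "'a::real_normed_vector \<Rightarrow> real"
  assumes conv: "convex_on UNIV g" and lip: "locally_lipschitz g"
  obtains L where "\<And>y. g 0 - L * norm y \<le> g y"
proof -
  obtain e L where e: "e > 0" and L: "L-lipschitz_on (ball 0 e) g"
    using lip unfolding locally_lipschitz_def by blast
  have "g 0 - L * norm y \<le> g y" for y
  proof (cases "norm y < e")
    case True
    then show ?thesis
      using lipschitz_onD[OF L, of y 0] e by (simp add: dist_real_def abs_le_iff)
  next
    case False
    define s where "s = e / (2 * norm y)"
    have "e \<le> norm y" "0 < norm y"
      using False e by linarith+
    then have s: "0 < s" "s \<le> 1" "norm (s *\<^sub>R y) < e"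
      using e by (auto simp: s_def field_simps)
    have "g 0 - L * (s * norm y) \<le> g (s *\<^sub>R y)"
      using lipschitz_onD[OF L, of "s *\<^sub>R y" 0] e s by (simp add: dist_real_def abs_le_iff)
    also have "g (s *\<^sub>R y) \<le> (1 - s) * g 0 + s * g y"
      using convex_onD[OF conv, of s 0 y] s by simp
    finally have "s * (g 0 - L * norm y) \<le> s * g y"
      by (simp add: algebra_simps)
    then show ?thesis
      using s by simp
  qed
  then show thesis by (rule that)
qed

lemma quadratic_lower_bound:
  fixes k L r :: real
  assumes "k > 0"
  shows "- (L\<^sup>2 / (4 * k)) \<le> k * r\<^sup>2 - L * r"
proof -
  have "0 \<le> (2 * k * r - L)\<^sup>2"
    by simp
  also have "\<dots> = 4 * k * (k * r\<^sup>2 - L * r) + L\<^sup>2"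
    by (simp add: power2_eq_square algebra_simps)
  finally show ?thesis
    using assms by (simp add: field_simps)
qed

lemma midpoint_strongly_convex_has_minimizer:
  fixes g :: "'a::banach \<Rightarrow> real"
  assumes cont: "\<And>x. isCont g x" and bdd: "bdd_below (range g)" and \<kappa>: "\<kappa> > 0"
    and mid: "\<And>x y. g ((1/2) *\<^sub>R (x + y)) \<le> (g x + g y) / 2 - \<kappa> * (norm (x - y))\<^sup>2"
  obtains u where "\<And>y. g u \<le> g y"
proof -
  define m where "m = Inf (range g)"
  have m_le: "m \<le> g y" for y
    unfolding m_def using bdd by (simp add: cInf_lower)
  have "\<exists>x. g x < m + inverse (real (Suc n))" for n
    using cInf_lessD[of "range g" "m + inverse (real (Suc n))"] by (auto simp: m_def)
  then obtain X where X: "\<And>n. g (X n) < m + inverse (real (Suc n))"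
    by metis
  have X_mono: "g (X n) < m + inverse (real (Suc N))" if "N \<le> n" for n N
  proof -
    have "inverse (real (Suc n)) \<le> inverse (real (Suc N))"
      using that by (intro le_imp_inverse_le) auto
    then show ?thesis
      using X[of n] by linarith
  qed
  have "Cauchy X"
  proof (rule CauchyI)
    fix \<epsilon> :: real assume "\<epsilon> > 0"
    with \<kappa> have "0 < \<kappa> * \<epsilon>\<^sup>2"
      by simp
    then obtain N where N: "inverse (real (Suc N)) < \<kappa> * \<epsilon>\<^sup>2"
      using reals_Archimedean by blast
    have "norm (X i - X j) < \<epsilon>" if "N \<le> i" "N \<le> j" for i j
    proof -
      have "\<kappa> * (norm (X i - X j))\<^sup>2 < \<kappa> * \<epsilon>\<^sup>2"
        using mid[of "X i" "X j"] m_le[of "(1/2) *\<^sub>R (X i + X j)"] X_mono[OF that(1)] X_mono[OF that(2)] N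
        by argo
      then show ?thesis
        using \<kappa> \<open>\<epsilon> > 0\<close> by (simp add: power_less_imp_less_base)
    qed
    then show "\<exists>M. \<forall>i\<ge>M. \<forall>j\<ge>M. norm (X i - X j) < \<epsilon>"
      by blast
  qed
  then obtain u where u: "X \<longlonglongrightarrow> u"
    using Cauchy_convergent_iff convergent_def by blast
  have "(\<lambda>n. g (X n)) \<longlonglongrightarrow> g u"
    by (rule isCont_tendsto_compose[OF cont u])
  moreover have "(\<lambda>n. m + inverse (real (Suc n))) \<longlonglongrightarrow> m + 0"
    by (intro tendsto_add tendsto_const LIMSEQ_inverse_real_of_nat)
  ultimately have "g u \<le> m + 0"
    using X by (intro LIMSEQ_le) (auto intro: less_imp_le)
  with m_le show thesis
    by (intro that[of u]) (simp add: order_trans)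
qed

section \<open>The hemivariational problem\<close>

lemma quadratic_form_midpoint:
  fixes A :: "'a::real_normed_vector \<Rightarrow>\<^sub>L ('a \<Rightarrow>\<^sub>L real)"
  shows "A ((1/2) *\<^sub>R (x + y)) ((1/2) *\<^sub>R (x + y)) = (A x x + A y y) / 2 - A (x - y) (x - y) / 4"
  by (simp add: blinfun.bilinear_simps algebra_simps add_divide_distrib diff_divide_distrib)

locale hemivariational_setting =
  fixes \<gamma> :: "'v::banach \<Rightarrow>\<^sub>L 'x::banach"
    and A :: "'v \<Rightarrow>\<^sub>L ('v \<Rightarrow>\<^sub>L real)"
    and f :: "'v \<Rightarrow>\<^sub>L real"
    and J :: "'x \<Rightarrow> 'x \<Rightarrow> real"
    and m_A m_\<alpha> m_L :: real
  assumes A_sym: "\<And>u v. A u v = A v u"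
    and A_coercive: "\<And>u. A u u \<ge> m_A * (norm u)\<^sup>2"
    and m_A_pos: "m_A > 0"
    and J_lipschitz: "\<And>w. locally_lipschitz (J w)"
    and J_monotone: "\<And>w1 w2 v1 v2. clarke_dd (J w1) v1 (v2 - v1) + clarke_dd (J w2) v2 (v1 - v2)
          \<le> m_\<alpha> * (norm (v1 - v2))\<^sup>2 + m_L * norm (w1 - w2) * norm (v1 - v2)"
    and m_\<alpha>_nonneg: "m_\<alpha> \<ge> 0" and m_L_nonneg: "m_L \<ge> 0"
    and smallness: "m_A > (m_\<alpha> + m_L) * (norm \<gamma>)\<^sup>2"
begin

(* energy 1 w is the paper's functional \<L>(w, -); \<beta> only rescales the quadratic term. *)
definition energy :: "real \<Rightarrow> 'v \<Rightarrow> 'v \<Rightarrow> real" where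
  "energy \<beta> w v = \<beta> / 2 * A v v - f v + J (\<gamma> w) (\<gamma> v)"

lemma locally_lipschitz_smooth_part: "locally_lipschitz (\<lambda>v. \<beta> / 2 * A v v - f v)"
  using locally_lipschitz_add[OF locally_lipschitz_quadratic_form[of "\<beta> / 2" A]
      locally_lipschitz_blinfun[of "- f"]]
  by (simp add: blinfun.minus_left)

lemma locally_lipschitz_energy: "locally_lipschitz (energy \<beta> w)"
  unfolding energy_def[abs_def]
  by (intro locally_lipschitz_add locally_lipschitz_smooth_part locally_lipschitz_compose_blinfun
      J_lipschitz)

lemma clarke_dd_smooth_part: "clarke_dd (\<lambda>v. \<beta> / 2 * A v v - f v) x u = \<beta> * A x u - f u"
proof (rule clarke_dd_eq_of_tendsto)
  have "((\<lambda>p. \<beta> * A (fst p) u + \<beta> * snd p / 2 * A u u - f u) \<longlongrightarrow> \<beta> * A x u + \<beta> * 0 / 2 * A u u - f u)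
      (clarke_filter x)"
    by (intro tendsto_intros blinfun.tendsto tendsto_fst_clarke_filter tendsto_snd_clarke_filter)
      simp_all
  moreover have "eventually (\<lambda>p. \<beta> * A (fst p) u + \<beta> * snd p / 2 * A u u - f u
      = diff_quot (\<lambda>v. \<beta> / 2 * A v v - f v) u p) (clarke_filter x)"
    using eventually_clarke_filter_pos
  proof eventually_elim
    case (elim p)
    then show ?case
      using A_sym[of u "fst p"]
      by (simp add: diff_quot_def blinfun.bilinear_simps field_simps)
  qed
  ultimately show "(diff_quot (\<lambda>v. \<beta> / 2 * A v v - f v) u \<longlongrightarrow> \<beta> * A x u - f u) (clarke_filter x)"
    by (simp add: tendsto_cong)
qed

lemma clarke_dd_energy_le:
  "clarke_dd (energy \<beta> w) u v \<le> \<beta> * A u v - f v + clarke_dd (J (\<gamma> w)) (\<gamma> u) (\<gamma> v)"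
proof -
  have "clarke_dd (energy \<beta> w) u v
      \<le> clarke_dd (\<lambda>v. \<beta> / 2 * A v v - f v) u v + clarke_dd (\<lambda>v. J (\<gamma> w) (\<gamma> v)) u v"
    unfolding energy_def[abs_def]
    by (rule clarke_dd_add_le[OF locally_lipschitz_smooth_part
          locally_lipschitz_compose_blinfun[OF J_lipschitz]])
  also have "\<dots> \<le> \<beta> * A u v - f v + clarke_dd (J (\<gamma> w)) (\<gamma> u) (\<gamma> v)"
    unfolding clarke_dd_smooth_part
    using clarke_dd_compose_blinfun_le[OF J_lipschitz] by (rule add_left_mono)
  finally show ?thesis .
qed

lemma clarke_dd_energy_monotone:
  assumes "\<beta> \<ge> 0"
  shows "clarke_dd (energy \<beta> w1) a (b - a) + clarke_dd (energy \<beta> w2) b (a - b)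
    \<le> (m_\<alpha> * (norm \<gamma>)\<^sup>2 - \<beta> * m_A) * (norm (a - b))\<^sup>2
      + m_L * (norm \<gamma>)\<^sup>2 * norm (w1 - w2) * norm (a - b)"
proof -
  have "clarke_dd (J (\<gamma> w1)) (\<gamma> a) (\<gamma> b - \<gamma> a) + clarke_dd (J (\<gamma> w2)) (\<gamma> b) (\<gamma> a - \<gamma> b)
      \<le> m_\<alpha> * (norm (\<gamma> a - \<gamma> b))\<^sup>2 + m_L * (norm (\<gamma> w1 - \<gamma> w2) * norm (\<gamma> a - \<gamma> b))"
    using J_monotone by (simp add: mult.assoc)
  also have "\<dots> \<le> m_\<alpha> * (norm \<gamma> * norm (a - b))\<^sup>2
      + m_L * ((norm \<gamma> * norm (w1 - w2)) * (norm \<gamma> * norm (a - b)))"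
    using m_\<alpha>_nonneg m_L_nonneg norm_blinfun_diff_le[of \<gamma>]
    by (intro add_mono mult_left_mono mult_mono power_mono) auto
  finally have J_part: "clarke_dd (J (\<gamma> w1)) (\<gamma> a) (\<gamma> b - \<gamma> a)
      + clarke_dd (J (\<gamma> w2)) (\<gamma> b) (\<gamma> a - \<gamma> b)
      \<le> m_\<alpha> * (norm \<gamma>)\<^sup>2 * (norm (a - b))\<^sup>2 + m_L * (norm \<gamma>)\<^sup>2 * norm (w1 - w2) * norm (a - b)"
    by (simp add: power2_eq_square mult_ac)
  have "\<beta> * (m_A * (norm (a - b))\<^sup>2) \<le> \<beta> * A (a - b) (a - b)"
    using A_coercive assms by (rule mult_left_mono)
  moreover have "\<beta> * A a (b - a) + \<beta> * A b (a - b) = - (\<beta> * A (a - b) (a - b))"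
    and "f (b - a) + f (a - b) = 0"
    by (simp_all add: blinfun.bilinear_simps algebra_simps)
  moreover have "(m_\<alpha> * (norm \<gamma>)\<^sup>2 - \<beta> * m_A) * (norm (a - b))\<^sup>2
      = m_\<alpha> * (norm \<gamma>)\<^sup>2 * (norm (a - b))\<^sup>2 - \<beta> * (m_A * (norm (a - b))\<^sup>2)"
    by (simp add: algebra_simps)
  ultimately show ?thesis
    using clarke_dd_energy_le[of \<beta> w1 a "b - a"] clarke_dd_energy_le[of \<beta> w2 b "a - b"] J_part
    unfolding blinfun.diff_right[of \<gamma>] by linarith
qed

lemma stationary_points_dist:
  assumes "0 \<in> clarke_subdiff (energy 1 w1) u1" and "0 \<in> clarke_subdiff (energy 1 w2) u2"
  shows "(m_A - m_\<alpha> * (norm \<gamma>)\<^sup>2) * norm (u1 - u2) \<le> m_L * (norm \<gamma>)\<^sup>2 * norm (w1 - w2)"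
proof -
  have "0 \<le> clarke_dd (energy 1 w1) u1 (u2 - u1) + clarke_dd (energy 1 w2) u2 (u1 - u2)"
    using assms by (simp add: zero_in_clarke_subdiff_iff)
  also have "\<dots> \<le> (m_\<alpha> * (norm \<gamma>)\<^sup>2 - m_A) * (norm (u1 - u2))\<^sup>2
      + m_L * (norm \<gamma>)\<^sup>2 * norm (w1 - w2) * norm (u1 - u2)"
    using clarke_dd_energy_monotone[of 1] by simp
  finally have "(m_A - m_\<alpha> * (norm \<gamma>)\<^sup>2) * norm (u1 - u2) * norm (u1 - u2)
      \<le> m_L * (norm \<gamma>)\<^sup>2 * norm (w1 - w2) * norm (u1 - u2)"
    by (simp add: power2_eq_square algebra_simps)
  moreover have "0 \<le> m_L * (norm \<gamma>)\<^sup>2 * norm (w1 - w2)"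
    using m_L_nonneg by simp
  ultimately show ?thesis
    by (cases "u1 = u2") (simp_all add: mult_le_cancel_right)
qed

definition \<theta> :: real where
  "\<theta> = m_\<alpha> * (norm \<gamma>)\<^sup>2 / m_A"

lemma \<theta>_nonneg: "0 \<le> \<theta>"
  and \<theta>_less_1: "\<theta> < 1"
  and \<theta>_mult_m_A: "\<theta> * m_A = m_\<alpha> * (norm \<gamma>)\<^sup>2"
proof -
  have "m_\<alpha> * (norm \<gamma>)\<^sup>2 < m_A"
    using smallness m_L_nonneg by (smt (verit) distrib_right zero_le_power2 mult_nonneg_nonneg)
  then show "0 \<le> \<theta>" "\<theta> < 1" "\<theta> * m_A = m_\<alpha> * (norm \<gamma>)\<^sup>2"
    using m_A_pos m_\<alpha>_nonneg by (simp_all add: \<theta>_def)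
qed

lemma convex_energy_\<theta>: "convex_on UNIV (energy \<theta> w)"
proof (rule convex_on_if_clarke_dd_monotone[OF locally_lipschitz_energy])
  fix a b
  show "clarke_dd (energy \<theta> w) a (b - a) + clarke_dd (energy \<theta> w) b (a - b) \<le> 0"
    using clarke_dd_energy_monotone[OF \<theta>_nonneg, of w a b w] \<theta>_mult_m_A by (simp add: mult.commute)
qed

lemma energy_split: "energy 1 w v = energy \<theta> w v + (1 - \<theta>) / 2 * A v v"
  by (simp add: energy_def field_simps)

lemma energy_midpoint:
  "energy 1 w ((1/2) *\<^sub>R (x + y))
    \<le> (energy 1 w x + energy 1 w y) / 2 - (1 - \<theta>) * m_A / 8 * (norm (x - y))\<^sup>2"
proof -
  have "energy \<theta> w ((1/2) *\<^sub>R (x + y)) \<le> (1 - 1/2) * energy \<theta> w x + 1/2 * energy \<theta> w y"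
    using convex_onD[OF convex_energy_\<theta>, of "1/2" x y] by (simp add: scaleR_add_right)
  moreover have "(1 - \<theta>) / 8 * (m_A * (norm (x - y))\<^sup>2) \<le> (1 - \<theta>) / 8 * A (x - y) (x - y)"
    using A_coercive \<theta>_less_1 by (simp add: mult_left_mono)
  moreover have "energy 1 w ((1/2) *\<^sub>R (x + y)) = energy \<theta> w ((1/2) *\<^sub>R (x + y))
      + (1 - \<theta>) / 4 * (A x x + A y y) - (1 - \<theta>) / 8 * A (x - y) (x - y)"
    by (simp only: energy_split quadratic_form_midpoint) (simp add: field_simps)
  moreover have "(energy 1 w x + energy 1 w y) / 2 - (1 - \<theta>) * m_A / 8 * (norm (x - y))\<^sup>2
      = (energy \<theta> w x + energy \<theta> w y) / 2 + (1 - \<theta>) / 4 * (A x x + A y y)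
        - (1 - \<theta>) / 8 * (m_A * (norm (x - y))\<^sup>2)"
    by (simp only: energy_split) (simp add: field_simps)
  ultimately show ?thesis
    by argo
qed

lemma bdd_below_energy: "bdd_below (range (energy 1 w))"
proof -
  obtain L where L: "\<And>y. energy \<theta> w 0 - L * norm y \<le> energy \<theta> w y"
    using convex_on_affine_minorant[OF convex_energy_\<theta> locally_lipschitz_energy] by blast
  define k where "k = (1 - \<theta>) / 2 * m_A"
  have k: "k > 0"
    using \<theta>_less_1 m_A_pos by (simp add: k_def)
  have "energy \<theta> w 0 - L\<^sup>2 / (4 * k) \<le> energy 1 w y" for y
  proof -
    have "k * (norm y)\<^sup>2 \<le> (1 - \<theta>) / 2 * A y y"
      using A_coercive[of y] \<theta>_less_1 by (simp add: k_def mult_left_mono mult.assoc)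
    then show ?thesis
      using L[of y] quadratic_lower_bound[OF k, of L "norm y"] energy_split[of w y] by linarith
  qed
  then show ?thesis
    by (intro bdd_belowI2)
qed

lemma exists_stationary_point: "\<exists>u. 0 \<in> clarke_subdiff (energy 1 w) u"
proof -
  have "(1 - \<theta>) * m_A / 8 > 0"
    using \<theta>_less_1 m_A_pos by simp
  then obtain u where "\<And>y. energy 1 w u \<le> energy 1 w y"
    using midpoint_strongly_convex_has_minimizer[OF locally_lipschitz_imp_isCont[OF locally_lipschitz_energy]
        bdd_below_energy _ energy_midpoint] by blast
  then have "0 \<in> clarke_subdiff (energy 1 w) u"
    unfolding zero_in_clarke_subdiff_iff
    by (blast intro: clarke_dd_nonneg_at_minimum[OF locally_lipschitz_energy])
  then show ?thesis ..
qed

lemma exists_fixed_stationary_point: "\<exists>u. 0 \<in> clarke_subdiff (energy 1 u) u"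
proof -
  define T where "T w = (SOME u. 0 \<in> clarke_subdiff (energy 1 w) u)" for w
  have T: "0 \<in> clarke_subdiff (energy 1 w) (T w)" for w
    unfolding T_def by (rule someI_ex[OF exists_stationary_point])
  define \<mu> where "\<mu> = m_A - m_\<alpha> * (norm \<gamma>)\<^sup>2"
  have \<mu>: "m_L * (norm \<gamma>)\<^sup>2 < \<mu>"
    using smallness by (simp add: \<mu>_def algebra_simps)
  have "0 \<le> m_L * (norm \<gamma>)\<^sup>2"
    using m_L_nonneg by simp
  with \<mu> have contraction: "0 \<le> m_L * (norm \<gamma>)\<^sup>2 / \<mu>" "m_L * (norm \<gamma>)\<^sup>2 / \<mu> < 1"
    by simp_all
  have "dist (T a) (T b) \<le> m_L * (norm \<gamma>)\<^sup>2 / \<mu> * dist a b" for a b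
    using stationary_points_dist[OF T T, of a b] \<mu> \<open>0 \<le> m_L * (norm \<gamma>)\<^sup>2\<close>
    by (simp add: \<mu>_def[symmetric] dist_norm field_simps)
  then obtain u where "T u = u"
    using banach_fix_type[OF contraction] by blast
  then show ?thesis
    using T[of u] by metis
qed

lemma fixed_stationary_point_unique:
  assumes "0 \<in> clarke_subdiff (energy 1 u1) u1" and "0 \<in> clarke_subdiff (energy 1 u2) u2"
  shows "u1 = u2"
proof -
  have "(m_A - m_\<alpha> * (norm \<gamma>)\<^sup>2) * norm (u1 - u2) \<le> m_L * (norm \<gamma>)\<^sup>2 * norm (u1 - u2)"
    using stationary_points_dist[OF assms] .
  then have "(m_A - (m_\<alpha> + m_L) * (norm \<gamma>)\<^sup>2) * norm (u1 - u2) \<le> 0"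
    by (simp add: algebra_simps)
  with smallness show ?thesis
    by (simp add: mult_le_0_iff)
qed

end

theorem lemma3:
  fixes \<gamma> :: "'v::banach \<Rightarrow>\<^sub>L 'x::banach"
    and A :: "'v \<Rightarrow>\<^sub>L ('v \<Rightarrow>\<^sub>L real)"
    and f :: "'v \<Rightarrow>\<^sub>L real"
    and J :: "'x \<Rightarrow> 'x \<Rightarrow> real"
    and m_A m_\<alpha> m_L c\<^sub>0 c\<^sub>1 c\<^sub>2 :: real
  assumes refl: "reflexive_space TYPE('v)"
    and A2: "\<forall>u v. A u v = A v u"
    and A3: "m_A > 0" "\<forall>u. A u u \<ge> m_A * (norm u)\<^sup>2"
    and J1: "\<forall>w. locally_lipschitz (J w)"
    and J2: "c\<^sub>0 \<ge> 0" "c\<^sub>1 \<ge> 0" "c\<^sub>2 \<ge> 0"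
      "\<forall>w v. \<forall>\<xi>\<in>clarke_subdiff (J w) v. norm \<xi> \<le> c\<^sub>0 + c\<^sub>1 * norm v + c\<^sub>2 * norm w"
    and J3: "m_\<alpha> \<ge> 0" "m_L \<ge> 0"
      "\<forall>w1 w2 v1 v2. clarke_dd (J w1) v1 (v2 - v1) + clarke_dd (J w2) v2 (v1 - v2)
          \<le> m_\<alpha> * (norm (v1 - v2))\<^sup>2 + m_L * norm (w1 - w2) * norm (v1 - v2)"
    and S: "m_A > (m_\<alpha> + m_L) * (norm \<gamma>)\<^sup>2"
  shows "\<exists>!u::'v. 0 \<in> clarke_subdiff
            (\<lambda>v. (1/2) * A v v - f v + J (\<gamma> u) (\<gamma> v)) u"
proof -
  interpret hemivariational_setting \<gamma> A f J m_A m_\<alpha> m_L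
    by unfold_locales (use A2 A3 J1 J3 S in auto)
  have "(\<lambda>v. (1/2) * A v v - f v + J (\<gamma> u) (\<gamma> v)) = energy 1 u" for u
    by (simp add: energy_def[abs_def])
  then show ?thesis
    using exists_fixed_stationary_point fixed_stationary_point_unique by auto
qed

end
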